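(* Let $G$ be a $4$-connected $1$-plane graph, let $u$ be a vertex of $G$, and let $ux$ and $uy$ be two edges of $G$. Let $S$ be the set of edges incident with $u$ lying strictly between $ux$ and $uy$ in $\operatorname{rot}_D(u)$ (going counter-clockwise from $ux$ to $uy$). If $|S|\ge 2$, then the edge $xy$, if it exists, does not cross any edge in $S$.
   Context: A $1$-plane graph is a finite simple graph $G$ together with a fixed drawing $D$ in the plane in which each edge is crossed at most once, no edge crosses itself, no two edges cross more than once, and no two edges sharing an endvertex cross. The rotation $\operatorname{rot}_D(u)$ of a vertex $u$ is the cyclic counter-clockwise order in which the edges incident with $u$ leave $u$ in $D$. $4$-connected means vertex-connectivity at least $4$. *)

theory Defs
  imports "HOL-Analysis.Analysis"
begin

definition simple_graph :: "'v set \<Rightarrow> ('v \<Rightarrow> 'v \<Rightarrow> bool) \<Rightarrow> bool" where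
  "simple_graph V E \<longleftrightarrow> finite V \<and>
     (\<forall>a b. E a b \<longrightarrow> a \<in> V \<and> b \<in> V \<and> a \<noteq> b \<and> E b a)"

definition graph_connected :: "'v set \<Rightarrow> ('v \<Rightarrow> 'v \<Rightarrow> bool) \<Rightarrow> bool" where
  "graph_connected V E \<longleftrightarrow>
     (\<forall>a\<in>V. \<forall>b\<in>V. (\<lambda>x y. E x y \<and> x \<in> V \<and> y \<in> V)\<^sup>*\<^sup>* a b)"

definition k_connected :: "'v set \<Rightarrow> ('v \<Rightarrow> 'v \<Rightarrow> bool) \<Rightarrow> nat \<Rightarrow> bool" where
  "k_connected V E k \<longleftrightarrow> card V > k \<and>
     (\<forall>X. X \<subseteq> V \<longrightarrow> card X < k \<longrightarrow> graph_connected (V - X) E)"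

text \<open>A drawing: pos places each vertex at a point of the plane (complex numbers),
and D a b is the curve (parametrised by [0,1]) drawing the edge ab, traversed
from a to b; D b a is the same curve reversed.\<close>

definition drawing ::
  "'v set \<Rightarrow> ('v \<Rightarrow> 'v \<Rightarrow> bool) \<Rightarrow> ('v \<Rightarrow> complex) \<Rightarrow> ('v \<Rightarrow> 'v \<Rightarrow> real \<Rightarrow> complex) \<Rightarrow> bool" where
  "drawing V E pos D \<longleftrightarrow> inj_on pos V \<and>
     (\<forall>a b. E a b \<longrightarrow>
        arc (D a b) \<and> pathstart (D a b) = pos a \<and> pathfinish (D a b) = pos b \<and>
        D b a = reversepath (D a b) \<and>
        (\<forall>t\<in>{0<..<1}. D a b t \<notin> pos ` V))"

definition crosses :: "('v \<Rightarrow> 'v \<Rightarrow> real \<Rightarrow> complex) \<Rightarrow> 'v \<Rightarrow> 'v \<Rightarrow> 'v \<Rightarrow> 'v \<Rightarrow> bool" where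
  "crosses D a b c d \<longleftrightarrow> (\<exists>s\<in>{0<..<1}. \<exists>t\<in>{0<..<1}. D a b s = D c d t)"

text \<open>1-plane drawing: each edge is crossed at most once, no two edges cross more
than once, and edges with a common end do not cross (no self-crossings are
already excluded since each edge is drawn as an arc).\<close>
definition one_plane ::
  "'v set \<Rightarrow> ('v \<Rightarrow> 'v \<Rightarrow> bool) \<Rightarrow> ('v \<Rightarrow> complex) \<Rightarrow> ('v \<Rightarrow> 'v \<Rightarrow> real \<Rightarrow> complex) \<Rightarrow> bool" where
  "one_plane V E pos D \<longleftrightarrow> simple_graph V E \<and> drawing V E pos D \<and>
     \<comment> \<open>no two edges sharing an endvertex cross\<close>
     (\<forall>a b c d. E a b \<and> E c d \<and> {a,b} \<noteq> {c,d} \<and> {a,b} \<inter> {c,d} \<noteq> {} \<longrightarrow>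
        \<not> crosses D a b c d) \<and>
     \<comment> \<open>no two edges cross more than once\<close>
     (\<forall>a b c d. E a b \<and> E c d \<and> {a,b} \<noteq> {c,d} \<longrightarrow>
        (\<forall>s1\<in>{0<..<1}. \<forall>t1\<in>{0<..<1}. \<forall>s2\<in>{0<..<1}. \<forall>t2\<in>{0<..<1}.
           D a b s1 = D c d t1 \<longrightarrow> D a b s2 = D c d t2 \<longrightarrow> s1 = s2)) \<and>
     \<comment> \<open>each edge is crossed (by other edges) at most once\<close>
     (\<forall>a b c d c' d'. E a b \<and> E c d \<and> E c' d' \<and> {a,b} \<noteq> {c,d} \<and> {a,b} \<noteq> {c',d'} \<and>
        crosses D a b c d \<and> crosses D a b c' d' \<longrightarrow> {c,d} = {c',d'})"

definition first_hit :: "('v \<Rightarrow> complex) \<Rightarrow> ('v \<Rightarrow> 'v \<Rightarrow> real \<Rightarrow> complex) \<Rightarrow> 'v \<Rightarrow> 'v \<Rightarrow> real \<Rightarrow> complex" where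
  "first_hit pos D u a r = D u a (Inf {t\<in>{0..1}. dist (D u a t) (pos u) = r})"

text \<open>Orientation of a triangle: positive iff p, q, s are counter-clockwise.\<close>
definition orient :: "complex \<Rightarrow> complex \<Rightarrow> complex \<Rightarrow> real" where
  "orient p q s = Im (cnj (q - p) * (s - p))"

text \<open>In the rotation at u, edge uw lies strictly between ua and ub going
counter-clockwise from ua to ub: on all sufficiently small circles around u,
the first points where the edges ua, uw, ub reach the circle appear in this
counter-clockwise cyclic order.\<close>
definition rot_between ::
  "('v \<Rightarrow> complex) \<Rightarrow> ('v \<Rightarrow> 'v \<Rightarrow> real \<Rightarrow> complex) \<Rightarrow> 'v \<Rightarrow> 'v \<Rightarrow> 'v \<Rightarrow> 'v \<Rightarrow> bool" where
  "rot_between pos D u a w b \<longleftrightarrow> a \<noteq> w \<and> w \<noteq> b \<and> a \<noteq> b \<and>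
     (\<exists>r0>0. \<forall>r. 0 < r \<and> r < r0 \<longrightarrow>
        orient (first_hit pos D u a r) (first_hit pos D u w r) (first_hit pos D u b r) > 0)"

end

theory Submission
  imports Defs
begin

(* Suppose the edge xy crosses an edge uw, where w and a second neighbour z of u both lie
   strictly between ux and uy in the rotation at u.  The triangle uxy is a Jordan curve, and
   the piece P of uw up to the crossing cuts it into two cycles: P, the part of xy towards y
   and the edge uy, which misses x; and P, the part of xy towards x and the edge ux, which
   misses y.  Since w and z leave u on the same side of the triangle, z and P lie on the same
   side, and Janiszewski's theorem shows that one of the two cycles separates z from the corner
   it misses.  But each cycle is avoided by every edge once u, y (resp. u, x) and one end of the
   at most one edge crossing uy (resp. ux) are deleted, so 4-connectivity joins z to that
   corner off the cycle. *)

section \<open>Exit times and polar coordinates\<close>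

lemma path_attains_dist:
  fixes g :: "real \<Rightarrow> 'a::metric_space"
  assumes "path g" "t \<in> {0..1}" "dist (g 0) c \<le> r" "r \<le> dist (g t) c"
  obtains s where "s \<in> {0..t}" "dist (g s) c = r"
proof -
  have "continuous_on {0..t} (\<lambda>s. dist (g s) c)"
    using assms(1,2) unfolding path_def
    by (intro continuous_intros) (auto elim: continuous_on_subset)
  then obtain s where "0 \<le> s" "s \<le> t" "dist (g s) c = r"
    using IVT'[of "\<lambda>s. dist (g s) c" 0 r t] assms(2-4) by auto
  then show ?thesis by (intro that) auto
qed

definition exit_time :: "(real \<Rightarrow> complex) \<Rightarrow> complex \<Rightarrow> real \<Rightarrow> real" where
  "exit_time g c r = Inf {t \<in> {0..1}. dist (g t) c = r}"

lemma first_hit_exit_time: "first_hit pos D u a r = D u a (exit_time (D u a) (pos u) r)"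
  by (simp add: first_hit_def exit_time_def)

lemma
  fixes g :: "real \<Rightarrow> complex"
  assumes g: "path g" "g 0 = c" and r: "0 < r" "t1 \<in> {0..1}" "r < dist (g t1) c"
  shows exit_time_in_unit: "exit_time g c r \<in> {0<..<1}"
    and dist_exit_time: "dist (g (exit_time g c r)) c = r"
    and dist_before_exit_time: "\<And>t. 0 \<le> t \<Longrightarrow> t < exit_time g c r \<Longrightarrow> dist (g t) c < r"
    and exit_time_less: "\<And>t. t \<in> {0..1} \<Longrightarrow> r < dist (g t) c \<Longrightarrow> exit_time g c r < t"
proof -
  let ?S = "{t \<in> {0..1}. dist (g t) c = r}"
  have reach: "\<exists>s\<in>{0..t}. dist (g s) c = r" if "t \<in> {0..1}" "r \<le> dist (g t) c" for t
  proof -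
    have "dist (g 0) c \<le> r" using g(2) r(1) by simp
    then show ?thesis using path_attains_dist[OF g(1) that(1) _ that(2)] by blast
  qed
  have bdd: "bdd_below ?S" by (rule bdd_belowI[of _ 0]) auto
  obtain s where "s \<in> {0..t1}" "dist (g s) c = r" using reach[OF r(2) less_imp_le[OF r(3)]] by blast
  then have "s \<in> ?S" using r(2) by auto
  then have "?S \<noteq> {}" by blast
  moreover have "closed ?S"
    using g(1) unfolding path_def
    by (intro continuous_closed_preimage_constant continuous_intros) auto
  ultimately have inS: "exit_time g c r \<in> ?S"
    unfolding exit_time_def using bdd by (intro closed_contains_Inf)
  then show dist_exit: "dist (g (exit_time g c r)) c = r" by simp
  have le: "exit_time g c r \<le> t" if "t \<in> ?S" for t
    unfolding exit_time_def using that bdd by (rule cInf_lower)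
  show less: "exit_time g c r < t" if t: "t \<in> {0..1}" "r < dist (g t) c" for t
  proof -
    obtain s where s: "s \<in> {0..t}" "dist (g s) c = r"
      using reach[OF t(1) less_imp_le[OF t(2)]] by blast
    then have "exit_time g c r \<le> s" "s \<noteq> t" using le t by auto
    with s show ?thesis by auto
  qed
  show "exit_time g c r \<in> {0<..<1}"
    using inS less[OF r(2,3)] r g(2) by (auto simp: less_eq_real_def)
  show "dist (g t) c < r" if "0 \<le> t" "t < exit_time g c r" for t
  proof (rule ccontr)
    assume "\<not> dist (g t) c < r"
    moreover have "t \<in> {0..1}" using that inS by auto
    ultimately obtain s where s: "s \<in> {0..t}" "dist (g s) c = r"
      using reach[of t] by auto
    then have "exit_time g c r \<le> s" using le \<open>t \<in> {0..1}\<close> by auto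
    with s that show False by auto
  qed
qed

definition polar :: "complex \<Rightarrow> real \<Rightarrow> real \<Rightarrow> complex" where
  "polar c r \<theta> = c + of_real r * cis \<theta>"

lemma dist_polar: "0 \<le> r \<Longrightarrow> dist (polar c r \<theta>) c = r"
  by (simp add: polar_def dist_norm norm_mult)

lemma polar_eqD:
  assumes "0 < r1" "0 < r2" "polar c r1 \<theta>1 = polar c r2 \<theta>2"
  shows "r1 = r2" "cis \<theta>1 = cis \<theta>2"
proof -
  show "r1 = r2" using dist_polar[of r1 c \<theta>1] dist_polar[of r2 c \<theta>2] assms by simp
  with assms show "cis \<theta>1 = cis \<theta>2" by (simp add: polar_def)
qed

lemma polar_minus_2pi: "polar c r (\<theta> - 2 * pi) = polar c r \<theta>"
  by (simp add: polar_def cis_divide[symmetric])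

lemma dist_eq_imp_polar:
  assumes "dist p c = r"
  obtains \<theta> where "p = polar c r \<theta>"
proof
  have "p - c = of_real r * cis (Arg (p - c))"
    using rcis_cmod_Arg[of "p - c"] assms by (simp add: rcis_def dist_norm)
  then show "p = polar c r (Arg (p - c))" by (simp add: polar_def algebra_simps)
qed

lemma cis_angle_in_window:
  obtains \<theta>' where "cis \<theta>' = cis \<theta>" "\<alpha> \<le> \<theta>'" "\<theta>' < \<alpha> + 2 * pi"
proof
  define k where "k = \<lfloor>(\<theta> - \<alpha>) / (2 * pi)\<rfloor>"
  have "cis (\<theta> - 2 * pi * k) = cis \<theta> * cis (- (2 * pi * k))"
    by (simp add: cis_mult)
  also have "cis (- (2 * pi * k)) = 1"
    using cis_multiple_2pi[of "- of_int k"] by simp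
  finally show "cis (\<theta> - 2 * pi * k) = cis \<theta>" by simp
  have "k \<le> (\<theta> - \<alpha>) / (2 * pi)" "(\<theta> - \<alpha>) / (2 * pi) < k + 1"
    unfolding k_def by linarith+
  then have "k * (2 * pi) \<le> \<theta> - \<alpha>" "\<theta> - \<alpha> < (k + 1) * (2 * pi)"
    by (simp_all add: le_divide_eq divide_less_eq)
  then show "\<alpha> \<le> \<theta> - 2 * pi * k" "\<theta> - 2 * pi * k < \<alpha> + 2 * pi"
    by (auto simp: algebra_simps)
qed

lemma cis_neq_within_period:
  assumes "0 < a - b" "a - b < 2 * pi"
  shows "cis a \<noteq> cis b"
proof
  assume "cis a = cis b"
  then have "cis (a - b) = 1" by (simp add: cis_divide[symmetric])
  then have "cos (a - b) = 1" by (simp add: cis.code complex_eq_iff)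
  then obtain n :: int where n: "a - b = of_int n * 2 * pi" using cos_one_2pi_int by blast
  then have "0 < n" "n < 1" using assms by (simp_all add: zero_less_mult_iff)
  then show False by simp
qed

lemma orient_polar:
  "orient (polar c \<rho> a) (polar c \<rho> \<gamma>) (polar c \<rho> b)
     = 4 * \<rho>\<^sup>2 * sin ((b - \<gamma>) / 2) * sin ((\<gamma> - a) / 2) * sin ((b - a) / 2)"
proof -
  have "orient (polar c \<rho> a) (polar c \<rho> \<gamma>) (polar c \<rho> b)
     = \<rho>\<^sup>2 * ((cos \<gamma> - cos a) * (sin b - sin a) - (sin \<gamma> - sin a) * (cos b - cos a))"
    by (simp add: orient_def polar_def algebra_simps power2_eq_square)
  also have "(cos \<gamma> - cos a) * (sin b - sin a) - (sin \<gamma> - sin a) * (cos b - cos a)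
     = 4 * sin ((b - \<gamma>) / 2) * sin ((\<gamma> - a) / 2) * sin ((b - a) / 2)"
  proof -
    define p q r where "p = a / 2" "q = \<gamma> / 2" "r = b / 2"
    then have A: "a = 2 * p" "\<gamma> = 2 * q" "b = 2 * r" by auto
    have halves: "(b - \<gamma>) / 2 = r - q" "(\<gamma> - a) / 2 = q - p" "(b - a) / 2 = r - p"
      using A by auto
    show ?thesis unfolding halves unfolding A
      using sin_cos_squared_add[of p] sin_cos_squared_add[of q] sin_cos_squared_add[of r]
      by (simp only: sin_diff cos_diff sin_double cos_double) algebra
  qed
  finally show ?thesis by simp
qed

lemma orient_pos_polar_between:
  assumes "0 < \<rho>" "dist q c = \<rho>" "\<alpha> \<le> \<beta>" "\<beta> < \<alpha> + 2 * pi"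
    and orient: "orient (polar c \<rho> \<alpha>) q (polar c \<rho> \<beta>) > 0"
  obtains \<gamma> where "q = polar c \<rho> \<gamma>" "\<alpha> < \<gamma>" "\<gamma> < \<beta>"
proof -
  obtain \<gamma>0 where "q = polar c \<rho> \<gamma>0" using dist_eq_imp_polar assms(2) by blast
  moreover obtain \<gamma> where \<gamma>: "cis \<gamma> = cis \<gamma>0" "\<alpha> \<le> \<gamma>" "\<gamma> < \<alpha> + 2 * pi"
    using cis_angle_in_window by blast
  ultimately have q: "q = polar c \<rho> \<gamma>" by (simp add: polar_def)
  have prod: "0 < 4 * \<rho>\<^sup>2 * sin ((\<beta> - \<gamma>) / 2) * sin ((\<gamma> - \<alpha>) / 2) * sin ((\<beta> - \<alpha>) / 2)"
    using orient unfolding q orient_polar .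
  have "0 \<le> sin ((\<gamma> - \<alpha>) / 2)" "0 \<le> sin ((\<beta> - \<alpha>) / 2)"
    using \<gamma> assms(3,4) by (intro sin_ge_zero; simp)+
  moreover have "sin ((\<gamma> - \<alpha>) / 2) \<noteq> 0" "sin ((\<beta> - \<alpha>) / 2) \<noteq> 0"
    using prod by auto
  ultimately have "0 < sin ((\<gamma> - \<alpha>) / 2)" "0 < sin ((\<beta> - \<alpha>) / 2)" "\<gamma> \<noteq> \<alpha>"
    by auto
  with prod have "0 < sin ((\<beta> - \<gamma>) / 2)" "\<gamma> \<noteq> \<alpha>"
    by (simp_all add: zero_less_mult_iff)
  moreover have "sin ((\<beta> - \<gamma>) / 2) \<le> 0" if "\<beta> \<le> \<gamma>"
  proof -
    have "sin ((\<beta> - \<gamma>) / 2) = - sin ((\<gamma> - \<beta>) / 2)"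
      by (metis minus_diff_eq minus_divide_left sin_minus)
    moreover have "0 \<le> sin ((\<gamma> - \<beta>) / 2)" using that \<gamma> assms(3) by (intro sin_ge_zero) auto
    ultimately show ?thesis by simp
  qed
  ultimately have "\<alpha> < \<gamma>" "\<gamma> < \<beta>" using \<gamma>(2) by force+
  with q show ?thesis by (rule that)
qed

definition annular_sector :: "complex \<Rightarrow> real \<Rightarrow> real \<Rightarrow> real \<Rightarrow> complex set" where
  "annular_sector c \<rho> a b = (\<lambda>p. polar c (fst p) (snd p)) ` ({\<rho>..2 * \<rho>} \<times> {a..b})"

lemma compact_annular_sector: "compact (annular_sector c \<rho> a b)"
  unfolding annular_sector_def polar_def
  by (intro compact_continuous_image compact_Times compact_Icc continuous_intros)

lemma connected_annular_sector: "connected (annular_sector c \<rho> a b)"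
  unfolding annular_sector_def polar_def
  by (intro connected_continuous_image connected_Times connected_Icc continuous_intros)

lemma polar_in_annular_sector:
  "a \<le> \<theta> \<Longrightarrow> \<theta> \<le> b \<Longrightarrow> 0 \<le> \<rho> \<Longrightarrow> polar c \<rho> \<theta> \<in> annular_sector c \<rho> a b"
  unfolding annular_sector_def by (rule image_eqI[where x="(\<rho>, \<theta>)"]) auto

lemma annular_sector_dist: "0 \<le> \<rho> \<Longrightarrow> p \<in> annular_sector c \<rho> a b \<Longrightarrow> \<rho> \<le> dist p c"
  unfolding annular_sector_def by (auto simp: dist_polar)

lemma annular_sectors_disjoint:
  assumes "0 < \<rho>" "b1 < a2" "b2 < a1 + 2 * pi"
  shows "annular_sector c \<rho> a1 b1 \<inter> annular_sector c \<rho> a2 b2 = {}"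
proof (rule ccontr)
  assume "annular_sector c \<rho> a1 b1 \<inter> annular_sector c \<rho> a2 b2 \<noteq> {}"
  then obtain r1 \<theta>1 r2 \<theta>2 where
    "polar c r1 \<theta>1 = polar c r2 \<theta>2" "\<rho> \<le> r1" "\<rho> \<le> r2"
    "a1 \<le> \<theta>1" "\<theta>1 \<le> b1" "a2 \<le> \<theta>2" "\<theta>2 \<le> b2"
    unfolding annular_sector_def by auto
  moreover from this have "0 < r1" "0 < r2" using assms(1) by linarith+
  ultimately have "cis \<theta>1 = cis \<theta>2" "0 < \<theta>2 - \<theta>1" "\<theta>2 - \<theta>1 < 2 * pi"
    using polar_eqD(2) assms(2,3) by (blast, linarith+)
  then show False using cis_neq_within_period[of \<theta>2 \<theta>1] by simp
qed

lemma circle_points_separated_by_sectors: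
  assumes "0 < \<rho>" "dist px c = \<rho>" "dist py c = \<rho>" "dist pw c = \<rho>" "dist pz c = \<rho>"
    and "0 < orient px pw py" "0 < orient px pz py"
  obtains B S where "compact B" "connected B" "connected S" "B \<inter> S = {}"
    "\<And>p. p \<in> B \<union> S \<Longrightarrow> \<rho> \<le> dist p c" "px \<in> B" "py \<in> B" "pw \<in> S" "pz \<in> S"
proof -
  obtain \<alpha> where \<alpha>: "px = polar c \<rho> \<alpha>" using dist_eq_imp_polar assms(2) by blast
  obtain \<beta> where \<beta>: "py = polar c \<rho> \<beta>" "\<alpha> \<le> \<beta>" "\<beta> < \<alpha> + 2 * pi"
  proof -
    obtain \<beta>0 where "py = polar c \<rho> \<beta>0" using dist_eq_imp_polar assms(3) by blast
    moreover obtain \<beta> where "cis \<beta> = cis \<beta>0" "\<alpha> \<le> \<beta>" "\<beta> < \<alpha> + 2 * pi"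
      using cis_angle_in_window by blast
    ultimately show ?thesis by (intro that[of \<beta>]) (simp_all add: polar_def)
  qed
  obtain \<gamma> where \<gamma>: "pw = polar c \<rho> \<gamma>" "\<alpha> < \<gamma>" "\<gamma> < \<beta>"
    by (rule orient_pos_polar_between[OF assms(1,4) \<beta>(2,3)]) (use assms(6) \<alpha> \<beta>(1) in simp)
  obtain \<delta> where \<delta>: "pz = polar c \<rho> \<delta>" "\<alpha> < \<delta>" "\<delta> < \<beta>"
    by (rule orient_pos_polar_between[OF assms(1,5) \<beta>(2,3)]) (use assms(7) \<alpha> \<beta>(1) in simp)
  define B S where "B = annular_sector c \<rho> (\<beta> - 2 * pi) \<alpha>"
    and "S = annular_sector c \<rho> (min \<gamma> \<delta>) (max \<gamma> \<delta>)"
  show ?thesis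
  proof (rule that)
    show "compact B" "connected B" "connected S"
      unfolding B_def S_def by (rule compact_annular_sector connected_annular_sector)+
    show "B \<inter> S = {}"
      unfolding B_def S_def using assms(1) \<gamma> \<delta> \<beta>(3) by (intro annular_sectors_disjoint) auto
    show "\<rho> \<le> dist p c" if "p \<in> B \<union> S" for p
      using that assms(1) annular_sector_dist unfolding B_def S_def by auto
    show "px \<in> B" unfolding B_def \<alpha> using \<beta>(3) assms(1) by (intro polar_in_annular_sector) auto
    show "py \<in> B" unfolding B_def \<beta>(1) polar_minus_2pi[of c \<rho> \<beta>, symmetric]
      using \<beta>(3) assms(1) by (intro polar_in_annular_sector) auto
    show "pw \<in> S" "pz \<in> S" unfolding S_def \<gamma>(1) \<delta>(1)
      using assms(1) by (intro polar_in_annular_sector; simp)+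
  qed
qed

section \<open>Arcs leaving a common point\<close>

lemma
  fixes g :: "real \<Rightarrow> 'a::metric_space"
  assumes "path g" "0 \<le> a" "b \<le> 1"
  shows compact_path_segment_image: "compact (g ` {a..b})"
    and connected_path_segment_image: "connected (g ` {a..b})"
proof -
  have "continuous_on {a..b} g"
    using assms unfolding path_def by (auto elim: continuous_on_subset)
  then show "compact (g ` {a..b})" "connected (g ` {a..b})"
    by (auto intro: compact_continuous_image connected_continuous_image)
qed

lemma path_segment_image_subset: "0 \<le> a \<Longrightarrow> b \<le> 1 \<Longrightarrow> g ` {a..b} \<subseteq> path_image g"
  by (auto simp: path_image_def)

lemma path_image_split: "s \<in> {0..1} \<Longrightarrow> path_image g = g ` {0..s} \<union> g ` {s..1}"
  unfolding path_image_def image_Un[symmetric] by (auto intro!: arg_cong[where f="image g"])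

lemma arc_segment_images_Int:
  assumes "arc g" "0 \<le> a" "a \<le> b" "b \<le> c" "c \<le> 1"
  shows "g ` {a..b} \<inter> g ` {b..c} = {g b}"
proof (intro equalityI subsetI)
  fix p assume "p \<in> g ` {a..b} \<inter> g ` {b..c}"
  then obtain s t where st: "s \<in> {a..b}" "t \<in> {b..c}" "p = g s" "g s = g t" by auto
  then have "s = t" using inj_onD[OF arc_imp_inj_on[OF assms(1)]] assms by force
  then show "p \<in> {g b}" using st by auto
qed (use assms in auto)

lemma arc_notin_segment_image:
  assumes "arc g" "t \<in> {0..1}" "t \<notin> {a..b}" "0 \<le> a" "b \<le> 1"
  shows "g t \<notin> g ` {a..b}"
  using assms inj_onD[OF arc_imp_inj_on[OF assms(1)]] by fastforce

lemma segment_before_exit_disjoint: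
  fixes g :: "real \<Rightarrow> 'a::metric_space"
  assumes "\<And>t. 0 \<le> t \<Longrightarrow> t < \<tau> \<Longrightarrow> dist (g t) c < \<rho>" "\<And>p. p \<in> A \<Longrightarrow> \<rho> \<le> dist p c"
    and "g \<tau> \<notin> A" "0 \<le> a"
  shows "g ` {a..\<tau>} \<inter> A = {}"
proof -
  have "g t \<notin> A" if "a \<le> t" "t \<le> \<tau>" for t
  proof (cases "t = \<tau>")
    case False
    then have "dist (g t) c < \<rho>" using that assms(4) by (intro assms(1)) auto
    then show ?thesis using assms(2) by force
  qed (use assms(3) in simp)
  then show ?thesis by auto
qed

lemma arcs_cut_at:
  fixes gx gy :: "real \<Rightarrow> complex"
  assumes arcs: "arc gx" "arc gy" and starts: "gx 0 = c" "gy 0 = c"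
    and meet: "path_image gx \<inter> path_image gy \<subseteq> {c}"
    and R: "closed R" "R \<inter> path_image gx \<subseteq> {gx 1}" "R \<inter> path_image gy \<subseteq> {gy 1}"
    and cuts: "\<tau>x \<in> {0<..<1}" "\<tau>y \<in> {0<..<1}" and B: "compact B" "gx \<tau>x \<in> B" "gy \<tau>y \<in> B"
  defines "K \<equiv> gx ` {0..\<tau>x} \<union> gy ` {0..\<tau>y} \<union> B"
    and "F \<equiv> gx ` {\<tau>x..1} \<union> gy ` {\<tau>y..1} \<union> B \<union> R"
  shows "compact K" "closed F" "K \<inter> F = B" "path_image gx \<union> path_image gy \<union> R \<subseteq> K \<union> F"
    and "c \<notin> gx ` {\<tau>x..1} \<union> gy ` {\<tau>y..1}"
proof -
  have paths: "path gx" "path gy" using arcs arc_imp_path by blast+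
  define Xin Yin Xout Yout where "Xin = gx ` {0..\<tau>x}" and "Yin = gy ` {0..\<tau>y}"
    and "Xout = gx ` {\<tau>x..1}" and "Yout = gy ` {\<tau>y..1}"
  have K: "K = Xin \<union> Yin \<union> B" and F: "F = Xout \<union> Yout \<union> B \<union> R"
    unfolding K_def F_def Xin_def Yin_def Xout_def Yout_def by simp_all
  have compact_parts: "compact Xin" "compact Yin" "compact Xout" "compact Yout"
    unfolding Xin_def Yin_def Xout_def Yout_def
    by (rule compact_path_segment_image; use paths cuts in auto)+
  have split: "path_image gx = Xin \<union> Xout" "path_image gy = Yin \<union> Yout"
    unfolding Xin_def Yin_def Xout_def Yout_def by (rule path_image_split; use cuts in auto)+
  have turn: "Xin \<inter> Xout = {gx \<tau>x}" "Yin \<inter> Yout = {gy \<tau>y}"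
    unfolding Xin_def Yin_def Xout_def Yout_def
    by (rule arc_segment_images_Int[OF arcs(1)] arc_segment_images_Int[OF arcs(2)]; use cuts in auto)+
  have ends: "gx 1 \<notin> Xin" "gy 1 \<notin> Yin" "c \<notin> Xout" "c \<notin> Yout"
    unfolding Xin_def Yin_def Xout_def Yout_def
    using arc_notin_segment_image[OF arcs(1), of 1 0 \<tau>x] arc_notin_segment_image[OF arcs(2), of 1 0 \<tau>y]
      arc_notin_segment_image[OF arcs(1), of 0 \<tau>x 1] arc_notin_segment_image[OF arcs(2), of 0 \<tau>y 1]
      cuts starts by auto
  then show "c \<notin> gx ` {\<tau>x..1} \<union> gy ` {\<tau>y..1}" unfolding Xout_def Yout_def by blast
  show "compact K" unfolding K by (intro compact_Un compact_parts B(1))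
  show "closed F"
    unfolding F by (intro closed_Un[OF compact_imp_closed R(1)] compact_Un compact_parts B(1))
  have "Xin \<inter> Yout = {}" "Yin \<inter> Xout = {}"
    using meet ends(3,4) unfolding split by blast+
  moreover have "Xin \<inter> R = {}" "Yin \<inter> R = {}"
    using R(2,3) ends(1,2) unfolding split by blast+
  moreover have "Xin \<inter> Xout \<subseteq> B" "Yin \<inter> Yout \<subseteq> B"
    using turn B(2,3) by simp_all
  ultimately show "K \<inter> F = B" unfolding K F by auto
  show "path_image gx \<union> path_image gy \<union> R \<subseteq> K \<union> F" unfolding K F split by blast
qed

lemma arcs_joined_through_set:
  fixes gw gz :: "real \<Rightarrow> complex"
  assumes arcs: "arc gw" "arc gz" and starts: "gw 0 = c" "gz 0 = c"
    and meet: "path_image gw \<inter> A \<subseteq> {c}" "path_image gz \<inter> A \<subseteq> {c}"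
    and exits: "\<tau>w \<in> {0<..<1}" "\<tau>z \<in> {0<..<1}" "a \<in> {0<..<\<tau>w}" "b \<in> {0<..<\<tau>z}"
    and inner: "\<And>t. 0 \<le> t \<Longrightarrow> t < \<tau>w \<Longrightarrow> dist (gw t) c < \<rho>"
      "\<And>t. 0 \<le> t \<Longrightarrow> t < \<tau>z \<Longrightarrow> dist (gz t) c < \<rho>"
    and far: "\<And>p. p \<in> B \<Longrightarrow> \<rho> \<le> dist p c"
    and S: "connected S" "S \<inter> (A \<union> B) = {}" "gw \<tau>w \<in> S" "gz \<tau>z \<in> S"
  shows "connected_component (- (A \<union> B)) (gw a) (gz b)"
proof -
  define W Z where "W = gw ` {a..\<tau>w}" and "Z = gz ` {b..\<tau>z}"
  have "W \<inter> B = {}" unfolding W_def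
    by (rule segment_before_exit_disjoint[OF inner(1) far]) (use exits S(2,3) in auto)
  moreover have "Z \<inter> B = {}" unfolding Z_def
    by (rule segment_before_exit_disjoint[OF inner(2) far]) (use exits S(2,4) in auto)
  moreover have "W \<subseteq> path_image gw" "Z \<subseteq> path_image gz"
    unfolding W_def Z_def by (rule path_segment_image_subset; use exits in auto)+
  moreover have "c \<notin> W" "c \<notin> Z"
    unfolding W_def Z_def
    using arc_notin_segment_image[OF arcs(1), of 0 a \<tau>w] arc_notin_segment_image[OF arcs(2), of 0 b \<tau>z]
      exits starts by auto
  ultimately have avoid: "W \<union> S \<union> Z \<subseteq> - (A \<union> B)"
    using meet S(2) by blast
  have conn: "connected (W \<union> S \<union> Z)"
  proof (intro connected_Un)
    show "connected W" "connected Z"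
      unfolding W_def Z_def
      by (rule connected_path_segment_image; use arcs arc_imp_path exits in auto)+
    have "gw \<tau>w \<in> W" "gz \<tau>z \<in> Z" unfolding W_def Z_def using exits by auto
    then show "W \<inter> S \<noteq> {}" "(W \<union> S) \<inter> Z \<noteq> {}" using S(3,4) by blast+
  qed (rule S(1))
  have "gw a \<in> W" "gz b \<in> Z" unfolding W_def Z_def using exits by auto
  then show ?thesis using avoid by (intro connected_componentI[OF conn]) auto
qed

text \<open>The picture: the arcs gw, gz leave c through the sector S of a small annulus, while
  gx, gy leave it through the complementary sector B.  Near c the two points are joined
  avoiding the far parts of gx, gy (and R), and through S avoiding the near parts of gx, gy
  (and B); Janiszewski's theorem combines the two, as the two obstacles meet in B only.\<close>
lemma arcs_through_sector_connected:
  fixes gx gy gw gz :: "real \<Rightarrow> complex"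
  assumes arcs: "arc gx" "arc gy" "arc gw" "arc gz"
    and starts: "gx 0 = c" "gy 0 = c" "gw 0 = c" "gz 0 = c"
    and meet: "path_image gx \<inter> path_image gy \<subseteq> {c}"
      "path_image gw \<inter> (path_image gx \<union> path_image gy) \<subseteq> {c}"
      "path_image gz \<inter> (path_image gx \<union> path_image gy) \<subseteq> {c}"
    and R: "closed R" "c \<notin> R" "R \<inter> path_image gx \<subseteq> {gx 1}" "R \<inter> path_image gy \<subseteq> {gy 1}"
    and \<rho>: "0 < \<rho>"
    and exits: "\<tau>x \<in> {0<..<1}" "\<tau>y \<in> {0<..<1}" "\<tau>w \<in> {0<..<1}" "\<tau>z \<in> {0<..<1}"
    and inner: "\<And>t. 0 \<le> t \<Longrightarrow> t < \<tau>x \<Longrightarrow> dist (gx t) c < \<rho>"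
      "\<And>t. 0 \<le> t \<Longrightarrow> t < \<tau>y \<Longrightarrow> dist (gy t) c < \<rho>"
      "\<And>t. 0 \<le> t \<Longrightarrow> t < \<tau>w \<Longrightarrow> dist (gw t) c < \<rho>"
      "\<And>t. 0 \<le> t \<Longrightarrow> t < \<tau>z \<Longrightarrow> dist (gz t) c < \<rho>"
    and sectors: "compact B" "connected B" "connected S" "B \<inter> S = {}"
      "\<And>p. p \<in> B \<union> S \<Longrightarrow> \<rho> \<le> dist p c"
      "gx \<tau>x \<in> B" "gy \<tau>y \<in> B" "gw \<tau>w \<in> S" "gz \<tau>z \<in> S"
  shows "\<exists>a\<in>{0<..<\<tau>w}. \<exists>b\<in>{0<..<\<tau>z}.
           connected_component (- (path_image gx \<union> path_image gy \<union> R)) (gw a) (gz b)"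
proof -
  have paths: "path gx" "path gy" "path gw" "path gz" using arcs arc_imp_path by blast+
  define Xin Yin where "Xin = gx ` {0..\<tau>x}" and "Yin = gy ` {0..\<tau>y}"
  define K F where "K = Xin \<union> Yin \<union> B" and "F = gx ` {\<tau>x..1} \<union> gy ` {\<tau>y..1} \<union> B \<union> R"
  note cut = arcs_cut_at[OF arcs(1,2) starts(1,2) meet(1) R(1,3,4) exits(1,2) sectors(1,6,7),
      folded Xin_def Yin_def, folded K_def F_def]
  have "c \<notin> F" unfolding F_def using cut(5) R(2) sectors(5)[of c] \<rho> by auto
  then obtain \<eta> where \<eta>: "0 < \<eta>" "\<forall>p\<in>F. \<eta> \<le> dist c p"
    using separate_point_closed[OF cut(2)] by blast
  have near_c: "\<exists>a\<in>{0<..<\<tau>}. dist (g a) c < \<eta>"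
    if g: "path g" "g 0 = c" "\<tau> \<in> {0<..<1}" "\<rho> \<le> dist (g \<tau>) c" for g \<tau>
  proof -
    define r where "r = min \<eta> \<rho> / 2"
    have r: "0 < r" "r < \<eta>" "r < \<rho>" using \<eta>(1) \<rho> by (auto simp: r_def)
    obtain a where "a \<in> {0..\<tau>}" "dist (g a) c = r"
      using path_attains_dist[OF g(1), of \<tau> c r] g r by auto
    then show ?thesis using r g by (intro bexI[of _ a]) (auto simp: less_eq_real_def)
  qed
  obtain a where a: "a \<in> {0<..<\<tau>w}" "dist (gw a) c < \<eta>"
    using near_c[OF paths(3) starts(3) exits(3)] sectors(5,8) by blast
  obtain b where b: "b \<in> {0<..<\<tau>z}" "dist (gz b) c < \<eta>"
    using near_c[OF paths(4) starts(4) exits(4)] sectors(5,9) by blast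
  have "connected_component (- F) (gw a) (gz b)"
  proof (rule connected_componentI[OF connected_ball[of c \<eta>]])
    show "ball c \<eta> \<subseteq> - F" using \<eta>(2) by force
  qed (use a b in \<open>auto simp: dist_commute\<close>)
  moreover have "connected_component (- K) (gw a) (gz b)"
  proof -
    have dist_S: "\<And>p. p \<in> S \<Longrightarrow> \<rho> \<le> dist p c" using sectors(5) by blast
    have "Xin \<inter> S = {}" unfolding Xin_def
      by (rule segment_before_exit_disjoint[OF inner(1) dist_S]) (use sectors(4,6) in auto)
    moreover have "Yin \<inter> S = {}" unfolding Yin_def
      by (rule segment_before_exit_disjoint[OF inner(2) dist_S]) (use sectors(4,7) in auto)
    moreover have "Xin \<subseteq> path_image gx" "Yin \<subseteq> path_image gy"
      unfolding Xin_def Yin_def by (rule path_segment_image_subset; use exits in auto)+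
    ultimately have "path_image gw \<inter> (Xin \<union> Yin) \<subseteq> {c}" "path_image gz \<inter> (Xin \<union> Yin) \<subseteq> {c}"
      "S \<inter> (Xin \<union> Yin \<union> B) = {}"
      using meet(2,3) sectors(4) by blast+
    then show ?thesis
      unfolding K_def using sectors(5,8,9) sectors(3)
      by (intro arcs_joined_through_set[OF arcs(3,4) starts(3,4) _ _ exits(3,4) a(1) b(1) inner(3,4)]) auto
  qed
  ultimately have "connected_component (- (K \<union> F)) (gw a) (gz b)"
    using Janiszewski[OF cut(1,2)] cut(3) sectors(2) by blast
  then show ?thesis
    using a b cut(4) by (blast intro: connected_component_of_subset)
qed

lemma eventually_at_right_0_obtain:
  fixes d :: real
  assumes "\<forall>\<^sub>F r in at_right 0. P r" "0 < d"
  obtains r where "0 < r" "r < d" "P r"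
proof -
  obtain b where "0 < b" "\<And>r. 0 < r \<Longrightarrow> r < b \<Longrightarrow> P r"
    using assms(1) unfolding eventually_at_right_field by blast
  then show ?thesis using that[of "min b d / 2"] assms(2) by auto
qed

lemma arc_dist_start_pos:
  fixes g :: "real \<Rightarrow> 'a::metric_space"
  assumes "arc g" "t \<in> {0<..1}"
  shows "0 < dist (g t) (g 0)"
  using assms inj_onD[OF arc_imp_inj_on[OF assms(1)], of t 0] by auto

lemma rotation_between_connected:
  fixes gx gy gw gz :: "real \<Rightarrow> complex"
  assumes arcs: "arc gx" "arc gy" "arc gw" "arc gz"
    and starts: "gx 0 = c" "gy 0 = c" "gw 0 = c" "gz 0 = c"
    and meet: "path_image gx \<inter> path_image gy \<subseteq> {c}"
      "path_image gw \<inter> (path_image gx \<union> path_image gy) \<subseteq> {c}"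
      "path_image gz \<inter> (path_image gx \<union> path_image gy) \<subseteq> {c}"
    and R: "closed R" "c \<notin> R" "R \<inter> path_image gx \<subseteq> {gx 1}" "R \<inter> path_image gy \<subseteq> {gy 1}"
    and T: "0 < T" "T \<le> 1"
    and rot_w: "\<forall>\<^sub>F r in at_right 0.
      0 < orient (gx (exit_time gx c r)) (gw (exit_time gw c r)) (gy (exit_time gy c r))"
    and rot_z: "\<forall>\<^sub>F r in at_right 0.
      0 < orient (gx (exit_time gx c r)) (gz (exit_time gz c r)) (gy (exit_time gy c r))"
  shows "\<exists>a\<in>{0<..<T}. \<exists>b\<in>{0<..<1}.
           connected_component (- (path_image gx \<union> path_image gy \<union> R)) (gw a) (gz b)"
proof -
  have paths: "path gx" "path gy" "path gw" "path gz" using arcs arc_imp_path by blast+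
  define d where "d = min (min (dist (gx 1) c) (dist (gy 1) c)) (min (dist (gw T) c) (dist (gz 1) c))"
  have "0 < d"
    using arc_dist_start_pos[OF arcs(1), of 1] arc_dist_start_pos[OF arcs(2), of 1]
      arc_dist_start_pos[OF arcs(3), of T] arc_dist_start_pos[OF arcs(4), of 1] starts T
    unfolding d_def by simp
  then obtain \<rho> where "0 < \<rho>" "\<rho> < d"
    and orients: "0 < orient (gx (exit_time gx c \<rho>)) (gw (exit_time gw c \<rho>)) (gy (exit_time gy c \<rho>)) \<and>
      0 < orient (gx (exit_time gx c \<rho>)) (gz (exit_time gz c \<rho>)) (gy (exit_time gy c \<rho>))"
    using eventually_at_right_0_obtain[OF eventually_conj[OF rot_w rot_z]] by blast
  then have \<rho>: "0 < \<rho>" "\<rho> < dist (gx 1) c" "\<rho> < dist (gy 1) c" "\<rho> < dist (gw T) c" "\<rho> < dist (gz 1) c"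
    unfolding d_def by simp_all
  have one: "(1::real) \<in> {0..1}" and T01: "T \<in> {0..1}" using T by auto
  note exit_x = exit_time_in_unit[OF paths(1) starts(1) \<rho>(1) one \<rho>(2)]
    dist_exit_time[OF paths(1) starts(1) \<rho>(1) one \<rho>(2)]
    dist_before_exit_time[OF paths(1) starts(1) \<rho>(1) one \<rho>(2)]
  note exit_y = exit_time_in_unit[OF paths(2) starts(2) \<rho>(1) one \<rho>(3)]
    dist_exit_time[OF paths(2) starts(2) \<rho>(1) one \<rho>(3)]
    dist_before_exit_time[OF paths(2) starts(2) \<rho>(1) one \<rho>(3)]
  note exit_w = exit_time_in_unit[OF paths(3) starts(3) \<rho>(1) T01 \<rho>(4)]
    dist_exit_time[OF paths(3) starts(3) \<rho>(1) T01 \<rho>(4)]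
    dist_before_exit_time[OF paths(3) starts(3) \<rho>(1) T01 \<rho>(4)]
    exit_time_less[OF paths(3) starts(3) \<rho>(1) T01 \<rho>(4) T01 \<rho>(4)]
  note exit_z = exit_time_in_unit[OF paths(4) starts(4) \<rho>(1) one \<rho>(5)]
    dist_exit_time[OF paths(4) starts(4) \<rho>(1) one \<rho>(5)]
    dist_before_exit_time[OF paths(4) starts(4) \<rho>(1) one \<rho>(5)]
  obtain B S where "compact B" "connected B" "connected S" "B \<inter> S = {}"
    "\<And>p. p \<in> B \<union> S \<Longrightarrow> \<rho> \<le> dist p c"
    "gx (exit_time gx c \<rho>) \<in> B" "gy (exit_time gy c \<rho>) \<in> B"
    "gw (exit_time gw c \<rho>) \<in> S" "gz (exit_time gz c \<rho>) \<in> S"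
    using circle_points_separated_by_sectors[OF \<rho>(1) exit_x(2) exit_y(2) exit_w(2) exit_z(2)] orients
    by blast
  then obtain a b where "a \<in> {0<..<exit_time gw c \<rho>}" "b \<in> {0<..<exit_time gz c \<rho>}"
    "connected_component (- (path_image gx \<union> path_image gy \<union> R)) (gw a) (gz b)"
    using arcs_through_sector_connected[OF arcs starts meet R \<rho>(1)
        exit_x(1) exit_y(1) exit_w(1) exit_z(1) exit_x(3) exit_y(3) exit_w(3) exit_z(3)]
    by blast
  then show ?thesis using exit_w(4) exit_z(1) by force
qed

section \<open>A Jordan curve cut by a chord\<close>

lemma connected_component_to_frontier:
  fixes U C :: "'a::real_normed_vector set"
  assumes "open U" "connected U" "U \<inter> C = {}" "closed C" "p \<notin> C" "p \<in> frontier U" "b \<in> U"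
  shows "connected_component (- C) b p"
proof -
  obtain e where e: "0 < e" "ball p e \<subseteq> - C"
    using assms(4,5) open_contains_ball[of "- C"] by auto
  have "p \<in> closure U" using assms(6) by (simp add: frontier_def)
  then obtain q where "q \<in> U" "dist q p < e" using e(1) closure_approachable by blast
  then have conn: "connected (U \<union> ball p e)"
    using connected_Un[OF assms(2) connected_ball] by (force simp: dist_commute)
  have "U \<union> ball p e \<subseteq> - C" using e assms(3) by blast
  then show ?thesis using assms(7) e(1) by (intro connected_componentI[OF conn]) auto
qed

lemma inside_outside_not_connected:
  assumes "a \<in> inside S" "b \<in> outside S"
  shows "\<not> connected_component (- S) a b"
proof
  assume "connected_component (- S) a b"
  then have "connected_component_set (- S) a = connected_component_set (- S) b"
    by (simp add: connected_component_eq)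
  then show False using assms by (simp add: inside_def outside_def)
qed

text \<open>Both points border the side of the curve not containing z, so Janiszewski's theorem
  would join z to that side.\<close>
lemma jordan_theta_separation:
  fixes g :: "real \<Rightarrow> complex"
  assumes jordan: "simple_path g" "pathfinish g = pathstart g"
    and C: "compact C1" "compact C2" "connected (C1 \<inter> C2)" "path_image g \<subseteq> C1 \<union> C2"
    and z: "z \<notin> path_image g" "C1 \<union> C2 - path_image g \<subseteq> connected_component_set (- path_image g) z"
    and p: "p \<in> path_image g" "p \<notin> C1" and q: "q \<in> path_image g" "q \<notin> C2"
  shows "\<not> (connected_component (- C1) z p \<and> connected_component (- C2) z q)"
proof
  assume zpq: "connected_component (- C1) z p \<and> connected_component (- C2) z q"
  define T where "T = path_image g"
  note J = Jordan_inside_outside[OF jordan, folded T_def]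
  define U where "U = (if z \<in> inside T then outside T else inside T)"
  have U: "U \<noteq> {}" "open U" "connected U" "frontier U = T" "U \<inter> T = {}"
    unfolding U_def using J by auto
  have far: "\<not> connected_component (- T) z b" if "b \<in> U" for b
  proof (cases "z \<in> inside T")
    case True
    then show ?thesis using that inside_outside_not_connected unfolding U_def by auto
  next
    case False
    then have "z \<in> outside T" using J z(1) unfolding T_def by blast
    then show ?thesis using that False inside_outside_not_connected connected_component_sym
      unfolding U_def by fastforce
  qed
  have "C1 \<inter> U = {}" "C2 \<inter> U = {}"
    using z(2) far U(5) unfolding T_def by blast+
  obtain b where "b \<in> U" using U(1) by blast
  have "connected_component (- C1) z b"
    using connected_component_to_frontier[OF U(2,3) _ compact_imp_closed[OF C(1)] p(2) _ \<open>b \<in> U\<close>]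
      \<open>C1 \<inter> U = {}\<close> U(4) p(1) zpq connected_component_sym connected_component_trans
    unfolding T_def by (metis inf_commute)
  moreover have "connected_component (- C2) z b"
    using connected_component_to_frontier[OF U(2,3) _ compact_imp_closed[OF C(2)] q(2) _ \<open>b \<in> U\<close>]
      \<open>C2 \<inter> U = {}\<close> U(4) q(1) zpq connected_component_sym connected_component_trans
    unfolding T_def by (metis inf_commute)
  ultimately have "connected_component (- (C1 \<union> C2)) z b"
    using Janiszewski[OF C(1) compact_imp_closed[OF C(2)] C(3)] by blast
  then have "connected_component (- T) z b"
    using C(4) unfolding T_def by (blast intro: connected_component_of_subset)
  then show False using far \<open>b \<in> U\<close> by blast
qed

section \<open>1-plane drawings\<close>

locale one_plane_graph =
  fixes V :: "'v set" and E :: "'v \<Rightarrow> 'v \<Rightarrow> bool"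
    and pos :: "'v \<Rightarrow> complex" and D :: "'v \<Rightarrow> 'v \<Rightarrow> real \<Rightarrow> complex"
  assumes one_plane: "one_plane V E pos D"
begin

definition edge_interior :: "'v \<Rightarrow> 'v \<Rightarrow> complex set" where
  "edge_interior a b = D a b ` {0<..<1}"

lemma edgeD: "E a b \<Longrightarrow> a \<in> V \<and> b \<in> V \<and> a \<noteq> b \<and> E b a"
  using one_plane by (simp add: one_plane_def simple_graph_def)

lemma inj_on_pos: "inj_on pos V"
  using one_plane by (simp add: one_plane_def drawing_def)

lemma
  assumes "E a b"
  shows arc_edge: "arc (D a b)"
    and edge_start: "D a b 0 = pos a"
    and edge_finish: "D a b 1 = pos b"
    and edge_reverse: "D b a = reversepath (D a b)"
    and edge_interior_not_vertex: "edge_interior a b \<inter> pos ` V = {}"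
  using one_plane assms
  by (auto simp: one_plane_def drawing_def pathstart_def pathfinish_def edge_interior_def)

lemma path_image_edge_reverse: "E a b \<Longrightarrow> path_image (D b a) = path_image (D a b)"
  by (simp add: edge_reverse)

lemma path_image_edge: "E a b \<Longrightarrow> path_image (D a b) = {pos a, pos b} \<union> edge_interior a b"
proof -
  assume "E a b"
  moreover have "{0..1::real} = {0, 1} \<union> {0<..<1}" by auto
  ultimately show ?thesis
    by (simp add: path_image_def edge_interior_def image_Un edge_start edge_finish)
qed

lemma edge_inj: "E a b \<Longrightarrow> s \<in> {0..1} \<Longrightarrow> t \<in> {0..1} \<Longrightarrow> D a b s = D a b t \<Longrightarrow> s = t"
  using arc_edge arc_imp_inj_on inj_onD by metis

lemma crosses_iff: "crosses D a b c d \<longleftrightarrow> edge_interior a b \<inter> edge_interior c d \<noteq> {}"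
  by (auto simp: crosses_def edge_interior_def)

lemma adjacent_edges_no_cross:
  assumes "E a b" "E c d" "{a, b} \<noteq> {c, d}" "{a, b} \<inter> {c, d} \<noteq> {}"
  shows "edge_interior a b \<inter> edge_interior c d = {}"
proof -
  have "\<forall>a b c d. E a b \<and> E c d \<and> {a, b} \<noteq> {c, d} \<and> {a, b} \<inter> {c, d} \<noteq> {} \<longrightarrow>
      \<not> crosses D a b c d"
    using one_plane unfolding one_plane_def by (elim conjE) assumption
  then show ?thesis using assms unfolding crosses_iff by blast
qed

lemma cross_unique_param:
  assumes "E a b" "E c d" "{a, b} \<noteq> {c, d}" "s1 \<in> {0<..<1}" "t1 \<in> {0<..<1}"
    "s2 \<in> {0<..<1}" "t2 \<in> {0<..<1}" "D a b s1 = D c d t1" "D a b s2 = D c d t2"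
  shows "s1 = s2"
proof -
  have "\<forall>a b c d. E a b \<and> E c d \<and> {a, b} \<noteq> {c, d} \<longrightarrow>
      (\<forall>s1\<in>{0<..<1}. \<forall>t1\<in>{0<..<1}. \<forall>s2\<in>{0<..<1}. \<forall>t2\<in>{0<..<1}.
         D a b s1 = D c d t1 \<longrightarrow> D a b s2 = D c d t2 \<longrightarrow> s1 = s2)"
    using one_plane unfolding one_plane_def by (elim conjE) assumption
  then show ?thesis using assms by blast
qed

lemma crossed_by_one_edge:
  assumes "E a b" "E c d" "E c' d'" "{a, b} \<noteq> {c, d}" "{a, b} \<noteq> {c', d'}"
    "edge_interior a b \<inter> edge_interior c d \<noteq> {}" "edge_interior a b \<inter> edge_interior c' d' \<noteq> {}"
  shows "{c, d} = {c', d'}"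
proof -
  have "\<forall>a b c d c' d'. E a b \<and> E c d \<and> E c' d' \<and> {a, b} \<noteq> {c, d} \<and> {a, b} \<noteq> {c', d'} \<and>
      crosses D a b c d \<and> crosses D a b c' d' \<longrightarrow> {c, d} = {c', d'}"
    using one_plane unfolding one_plane_def by (elim conjE) assumption
  then show ?thesis using assms unfolding crosses_iff by blast
qed

lemma vertex_on_edge:
  assumes "E a b" "v \<in> V" "pos v \<in> path_image (D a b)"
  shows "v = a \<or> v = b"
proof -
  have "pos v = pos a \<or> pos v = pos b"
    using assms path_image_edge[OF assms(1)] edge_interior_not_vertex[OF assms(1)] by blast
  then show ?thesis using assms(1,2) edgeD inj_on_pos by (metis inj_onD)
qed

lemma uncrossed_edges_Int:
  assumes "E a b" "E c d" "edge_interior a b \<inter> edge_interior c d = {}"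
  shows "path_image (D a b) \<inter> path_image (D c d) = pos ` ({a, b} \<inter> {c, d})"
proof -
  have "pos ` {a, b} \<union> pos ` {c, d} \<subseteq> pos ` V" using assms(1,2) edgeD by auto
  then have "path_image (D a b) \<inter> path_image (D c d) = pos ` {a, b} \<inter> pos ` {c, d}"
    unfolding path_image_edge[OF assms(1)] path_image_edge[OF assms(2)]
    using assms(3) edge_interior_not_vertex[OF assms(1)] edge_interior_not_vertex[OF assms(2)]
    by auto
  also have "\<dots> = pos ` ({a, b} \<inter> {c, d})"
    using inj_on_pos assms(1,2) edgeD by (intro inj_on_image_Int[symmetric]) auto
  finally show ?thesis .
qed

lemma adjacent_edges_Int:
  assumes "E v a" "E v b" "a \<noteq> b"
  shows "path_image (D v a) \<inter> path_image (D v b) = {pos v}"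
proof -
  have "v \<noteq> a" "v \<noteq> b" using assms edgeD by blast+
  then have common: "{v, a} \<inter> {v, b} = {v}" and "{v, a} \<noteq> {v, b}" using assms(3) by auto
  then show ?thesis
    using uncrossed_edges_Int[OF assms(1,2) adjacent_edges_no_cross[OF assms(1,2)]]
    unfolding common by simp
qed

lemma triangle_corners:
  assumes "E u x" "E u y" "E x y"
  shows "path_image (D u x) \<inter> path_image (D u y) = {pos u}"
    and "path_image (D u x) \<inter> path_image (D x y) = {pos x}"
    and "path_image (D u y) \<inter> path_image (D x y) = {pos y}"
proof -
  have "x \<noteq> y" "x \<noteq> u" "u \<noteq> y" using assms edgeD by blast+
  have xu: "E x u" and yu: "E y u" and yx: "E y x" using assms edgeD by blast+
  show "path_image (D u x) \<inter> path_image (D u y) = {pos u}"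
    using adjacent_edges_Int[OF assms(1,2) \<open>x \<noteq> y\<close>] .
  show "path_image (D u x) \<inter> path_image (D x y) = {pos x}"
    using adjacent_edges_Int[OF xu assms(3) \<open>u \<noteq> y\<close>]
    by (simp add: path_image_edge_reverse[OF assms(1)])
  show "path_image (D u y) \<inter> path_image (D x y) = {pos y}"
    using adjacent_edges_Int[OF yu yx \<open>x \<noteq> u\<close>[symmetric]]
    by (simp add: path_image_edge_reverse[OF assms(2)] path_image_edge_reverse[OF assms(3)])
qed

lemma triangle_jordan:
  assumes "E u x" "E u y" "E x y"
  defines "g \<equiv> D u x +++ (D x y +++ reversepath (D u y))"
  shows "simple_path g" "pathfinish g = pathstart g"
    and "path_image g = path_image (D u x) \<union> path_image (D x y) \<union> path_image (D u y)"
proof -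
  have ends: "pathstart (D a b) = pos a" "pathfinish (D a b) = pos b" if "E a b" for a b
    using edge_start[OF that] edge_finish[OF that] by (simp_all add: pathstart_def pathfinish_def)
  note corners = triangle_corners[OF assms(1-3)]
  have arc2: "arc (D x y +++ reversepath (D u y))"
    using corners(3) assms arc_edge ends by (intro arc_join) (auto simp: arc_reversepath)
  have image2: "path_image (D x y +++ reversepath (D u y)) = path_image (D x y) \<union> path_image (D u y)"
    using assms ends by (simp add: path_image_join)
  show "simple_path g" unfolding g_def
    using arc_edge[OF assms(1)] arc2 corners(1,2) assms ends
    by (intro simple_path_join_loop) (auto simp: image2)
  show "pathfinish g = pathstart g" unfolding g_def using assms ends by simp
  show "path_image g = path_image (D u x) \<union> path_image (D x y) \<union> path_image (D u y)"
    unfolding g_def using assms ends image2 by (simp add: path_image_join Un_assoc)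
qed

lemma exists_neighbour_outside:
  assumes kc: "k_connected V E 4" and v: "v \<in> V" and A: "finite A" "card A \<le> 3"
  obtains v' where "E v v'" "v' \<notin> A"
proof -
  have "\<exists>v'. E v v' \<and> v' \<notin> A"
  proof (rule ccontr)
    assume "\<not> ?thesis"
    then have nbrs: "E v v' \<Longrightarrow> v' \<in> A" for v' by blast
    define X where "X = A \<inter> V - {v}"
    have "card X \<le> card A" unfolding X_def using A(1) by (intro card_mono) auto
    then have X: "X \<subseteq> V" "card X < 4" using A(2) unfolding X_def by auto
    then have conn: "graph_connected (V - X) E" using kc by (simp add: k_connected_def)
    have "\<not> V - X \<subseteq> {v}"
    proof
      assume "V - X \<subseteq> {v}"
      then have "card (V - X) \<le> 1" using card_mono[of "{v}" "V - X"] by simp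
      moreover have "card (V - X) = card V - card X"
        using X(1) A(1) unfolding X_def by (intro card_Diff_subset) auto
      moreover have "card V > 4" using kc by (simp add: k_connected_def)
      ultimately show False using X(2) by linarith
    qed
    then obtain b where b: "b \<in> V - X" "b \<noteq> v" by blast
    have "v \<in> V - X" using v unfolding X_def by blast
    then have "(\<lambda>p q. E p q \<and> p \<in> V - X \<and> q \<in> V - X)\<^sup>*\<^sup>* v b"
      using conn b(1) unfolding graph_connected_def by blast
    then show False
    proof (cases rule: converse_rtranclpE)
      case base
      then show False using b(2) by simp
    next
      case (step q)
      then have "q \<in> A" "q \<in> V" "q \<noteq> v" using nbrs edgeD by blast+
      then show False using step unfolding X_def by blast
    qed
  qed
  then show ?thesis using that by blast
qed

lemma edge_connected_component:
  assumes "E p q" "path_image (D p q) \<inter> J = {}"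
  shows "connected_component (- J) (pos p) (pos q)"
proof (rule connected_componentI)
  show "connected (path_image (D p q))"
    using arc_edge[OF assms(1)] by (simp add: arc_imp_path connected_path_image)
  show "pos p \<in> path_image (D p q)" "pos q \<in> path_image (D p q)"
    using path_image_edge[OF assms(1)] by auto
qed (use assms(2) in blast)

lemma k_connected_connected_component:
  assumes kc: "k_connected V E 4" and X: "X \<subseteq> V" "card X < 4" and ab: "a \<in> V - X" "b \<in> V - X"
    and avoid: "\<And>p q. E p q \<Longrightarrow> p \<in> V - X \<Longrightarrow> q \<in> V - X \<Longrightarrow> path_image (D p q) \<inter> J = {}"
    and "pos a \<notin> J"
  shows "connected_component (- J) (pos a) (pos b)"
proof -
  have "(\<lambda>p q. E p q \<and> p \<in> V - X \<and> q \<in> V - X)\<^sup>*\<^sup>* a b"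
    using kc X ab unfolding k_connected_def graph_connected_def by blast
  then show ?thesis
  proof (induction rule: rtranclp_induct)
    case base
    then show ?case using \<open>pos a \<notin> J\<close> by simp
  next
    case (step p q)
    then have "connected_component (- J) (pos p) (pos q)"
      using edge_connected_component avoid by blast
    with step.IH show ?case by (rule connected_component_trans)
  qed
qed

lemma rot_between_eventually:
  assumes "rot_between pos D u a w b"
  shows "\<forall>\<^sub>F r in at_right 0. 0 < orient (D u a (exit_time (D u a) (pos u) r))
    (D u w (exit_time (D u w) (pos u) r)) (D u b (exit_time (D u b) (pos u) r))"
  using assms unfolding rot_between_def first_hit_exit_time eventually_at_right_field by auto

end

section \<open>An edge crossing a side of a triangle\<close>

locale triangle_crossing = one_plane_graph V E pos D
  for V :: "'v set" and E pos D +
  fixes u x y w :: 'v and s t :: real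
  assumes edges: "E u x" "E u y" "E x y" "E u w"
    and w_ne: "w \<noteq> x" "w \<noteq> y"
    and params: "s \<in> {0<..<1}" "t \<in> {0<..<1}"
    and crossing: "D x y s = D u w t"
begin

lemma distinct: "u \<noteq> x" "u \<noteq> y" "u \<noteq> w" "x \<noteq> y"
  using edges edgeD by blast+

lemma vertices: "u \<in> V" "x \<in> V" "y \<in> V" "w \<in> V"
  using edges edgeD by blast+

definition crossing_cycle :: "complex set" where
  "crossing_cycle = D u w ` {0..t} \<union> D x y ` {s..1} \<union> path_image (D u y)"

definition triangle :: "complex set" where
  "triangle = path_image (D u x) \<union> path_image (D u y) \<union> path_image (D x y)"

lemma crossing_segments:
  "D u w ` {0..t} \<subseteq> path_image (D u w)" "D x y ` {0..s} \<subseteq> path_image (D x y)"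
  "D x y ` {s..1} \<subseteq> path_image (D x y)"
  by (rule path_segment_image_subset; use params in auto)+

lemma crossing_segments_avoid_ends:
  "pos w \<notin> D u w ` {0..t}" "pos x \<notin> D x y ` {s..1}" "pos y \<notin> D x y ` {0..s}"
proof safe
  fix r
  show False if "r \<in> {0..t}" "pos w = D u w r"
    using edge_inj[OF edges(4), of r 1] edge_finish[OF edges(4)] that params by auto
  show False if "r \<in> {s..1}" "pos x = D x y r"
    using edge_inj[OF edges(3), of r 0] edge_start[OF edges(3)] that params by auto
  show False if "r \<in> {0..s}" "pos y = D x y r"
    using edge_inj[OF edges(3), of r 1] edge_finish[OF edges(3)] that params by auto
qed

lemma compact_crossing_cycle: "compact crossing_cycle"
proof -
  have "path (D a b)" if "E a b" for a b using arc_imp_path arc_edge that by blast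
  then have "compact (D u w ` {0..t})" "compact (D x y ` {s..1})" "compact (path_image (D u y))"
    using edges params by (auto intro!: compact_path_segment_image compact_path_image)
  then show ?thesis unfolding crossing_cycle_def by (intro compact_Un)
qed

lemma xy_crosses_uw: "edge_interior x y \<inter> edge_interior u w \<noteq> {}"
  using crossing params unfolding edge_interior_def by blast

lemma xy_neq_uw: "{x, y} \<noteq> {u, w}"
  using distinct(1,2) by (auto simp: doubleton_eq_iff)

lemma edge_not_crossing_xy:
  assumes "E a b" "{a, b} \<noteq> {u, w}" "{a, b} \<noteq> {x, y}"
  shows "edge_interior a b \<inter> edge_interior x y = {}"
proof (rule ccontr)
  assume "edge_interior a b \<inter> edge_interior x y \<noteq> {}"
  then have "{u, w} = {a, b}"
    using crossed_by_one_edge[OF edges(3,4) assms(1) xy_neq_uw] xy_crosses_uw assms(3)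
    by (simp add: inf_commute eq_commute)
  then show False using assms(2) by simp
qed

lemma edge_not_crossing_uw:
  assumes "E a b" "{a, b} \<noteq> {x, y}" "{a, b} \<noteq> {u, w}"
  shows "edge_interior a b \<inter> edge_interior u w = {}"
proof (rule ccontr)
  assume "edge_interior a b \<inter> edge_interior u w \<noteq> {}"
  then have "{x, y} = {a, b}"
    using crossed_by_one_edge[OF edges(4,3) assms(1) xy_neq_uw[symmetric]] xy_crosses_uw assms(3)
    by (simp add: inf_commute eq_commute)
  then show False using assms(2) by simp
qed

text \<open>An edge not crossing uy and avoiding u and y can only meet the edges uw, xy in their ends
  w, x (they are crossed by each other only), and these ends are not on the cycle.\<close>
lemma edge_avoids_crossing_cycle:
  assumes "E a b" "a \<notin> {u, y}" "b \<notin> {u, y}" "edge_interior a b \<inter> edge_interior u y = {}"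
  shows "path_image (D a b) \<inter> crossing_cycle = {}"
proof -
  have "{a, b} \<noteq> {u, w}" "{a, b} \<noteq> {x, y}" using assms(2,3) by auto
  then have "path_image (D a b) \<inter> path_image (D u w) = pos ` ({a, b} \<inter> {u, w})"
    "path_image (D a b) \<inter> path_image (D x y) = pos ` ({a, b} \<inter> {x, y})"
    "path_image (D a b) \<inter> path_image (D u y) = pos ` ({a, b} \<inter> {u, y})"
    using uncrossed_edges_Int assms(1,4) edges edge_not_crossing_uw edge_not_crossing_xy by auto
  moreover have "{a, b} \<inter> {u, w} \<subseteq> {w}" "{a, b} \<inter> {x, y} \<subseteq> {x}" "{a, b} \<inter> {u, y} = {}"
    using assms(2,3) by auto
  ultimately have uw: "path_image (D a b) \<inter> path_image (D u w) \<subseteq> {pos w}"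
    and xy: "path_image (D a b) \<inter> path_image (D x y) \<subseteq> {pos x}"
    and uy: "path_image (D a b) \<inter> path_image (D u y) = {}"
    by auto
  have segment: "A \<inter> S = {}" if "A \<inter> P \<subseteq> {e}" "S \<subseteq> P" "e \<notin> S" for A P S :: "complex set" and e
    using that by blast
  show ?thesis
    unfolding crossing_cycle_def Int_Un_distrib
    using segment[OF uw crossing_segments(1) crossing_segments_avoid_ends(1)]
      segment[OF xy crossing_segments(3) crossing_segments_avoid_ends(2)] uy
    by simp
qed

lemma vertex_off_crossing_cycle:
  assumes "v \<in> V" "v \<notin> {u, w, y}"
  shows "pos v \<notin> crossing_cycle"
proof -
  have "pos v \<notin> path_image (D u w)" "pos v \<notin> path_image (D u y)"
    using vertex_on_edge[OF edges(4) assms(1)] vertex_on_edge[OF edges(2) assms(1)] assms(2) by auto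
  moreover have "pos v \<notin> D x y ` {s..1}"
  proof (cases "v = x")
    case False
    then show ?thesis
      using vertex_on_edge[OF edges(3) assms(1)] assms(2) crossing_segments(3) by auto
  qed (use crossing_segments_avoid_ends(2) in simp)
  ultimately show ?thesis unfolding crossing_cycle_def using crossing_segments(1) by blast
qed

definition hits_uy_crossings :: "'v set \<Rightarrow> bool" where
  "hits_uy_crossings X \<longleftrightarrow> (\<forall>a b. E a b \<and> {a, b} \<noteq> {u, y} \<and>
     edge_interior a b \<inter> edge_interior u y \<noteq> {} \<longrightarrow> a \<in> X \<or> b \<in> X)"

lemma hits_uy_crossings_end:
  assumes "E p q" "{p, q} \<noteq> {u, y}" "edge_interior p q \<inter> edge_interior u y \<noteq> {}"
    and "p \<in> X \<or> q \<in> X"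
  shows "hits_uy_crossings X"
  unfolding hits_uy_crossings_def
proof (intro allI impI)
  fix a b assume ab: "E a b \<and> {a, b} \<noteq> {u, y} \<and> edge_interior a b \<inter> edge_interior u y \<noteq> {}"
  have "{p, q} = {a, b}"
    by (rule crossed_by_one_edge[OF edges(2) assms(1)]) (use ab assms(2,3) in \<open>auto simp: inf_commute\<close>)
  then show "a \<in> X \<or> b \<in> X" using assms(4) by auto
qed

lemma edge_outside_avoids_crossing_cycle:
  assumes "hits_uy_crossings X" "u \<in> X" "y \<in> X" "E a b" "a \<notin> X" "b \<notin> X"
  shows "path_image (D a b) \<inter> crossing_cycle = {}"
proof (rule edge_avoids_crossing_cycle[OF assms(4)])
  show "a \<notin> {u, y}" "b \<notin> {u, y}" using assms by auto
  then show "edge_interior a b \<inter> edge_interior u y = {}"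
    using assms unfolding hits_uy_crossings_def by auto
qed

lemma joined_off_crossing_cycle:
  assumes kc: "k_connected V E 4" and X: "X \<subseteq> V" "card X < 4" "hits_uy_crossings X" "u \<in> X" "y \<in> X"
    and ab: "a \<in> V - X" "b \<in> V - X" "a \<noteq> w"
  shows "connected_component (- crossing_cycle) (pos a) (pos b)"
  using k_connected_connected_component[OF kc X(1,2) ab(1,2)] edge_outside_avoids_crossing_cycle[OF X(3-5)]
    vertex_off_crossing_cycle ab X(4,5) by blast

text \<open>Deleting u, y and an end of the edge crossing uy (if any) leaves z and x connected, and
  no remaining edge meets the cycle.  If that edge is xz itself, delete x instead and go
  round through a further neighbour of x.\<close>
lemma crossing_cycle_not_separating:
  assumes kc: "k_connected V E 4" and z: "E u z" "z \<notin> {w, x, y}"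
  shows "connected_component (- crossing_cycle) (pos z) (pos x)"
proof -
  have "z \<in> V" "z \<noteq> u" using z edgeD by blast+
  then have joined: "connected_component (- crossing_cycle) (pos z) (pos v)"
    if "X \<subseteq> V" "card X < 4" "hits_uy_crossings X" "u \<in> X" "y \<in> X" "z \<notin> X" "v \<in> V - X" for X v
    using joined_off_crossing_cycle[OF kc that(1-5)] that(6,7) z(2) by blast
  have card3: "card {a, b, c} < 4" for a b c :: 'v by (simp add: card_insert_if)
  consider (uncrossed) "hits_uy_crossings {u, y}"
    | (crossed) p q where "E p q" "{p, q} \<noteq> {u, y}" "edge_interior p q \<inter> edge_interior u y \<noteq> {}"
    unfolding hits_uy_crossings_def by blast
  then show ?thesis
  proof cases
    case uncrossed
    then show ?thesis
      using joined[of "{u, y}" x] vertices distinct z(2) \<open>z \<noteq> u\<close> by (auto simp: card_insert_if)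
  next
    case crossed
    note hits = hits_uy_crossings_end[OF crossed]
    have "p \<in> V" "q \<in> V" "p \<noteq> q" using crossed(1) edgeD by blast+
    then consider (p_free) "p \<notin> {x, z}" | (q_free) "q \<notin> {x, z}" | (xz) "{p, q} = {x, z}"
      by blast
    then show ?thesis
    proof cases
      case p_free
      then show ?thesis
        using joined[of "{u, y, p}" x] hits[of "{u, y, p}"] card3 vertices distinct
          \<open>p \<in> V\<close> z(2) \<open>z \<noteq> u\<close> by auto
    next
      case q_free
      then show ?thesis
        using joined[of "{u, y, q}" x] hits[of "{u, y, q}"] card3 vertices distinct
          \<open>q \<in> V\<close> z(2) \<open>z \<noteq> u\<close> by auto
    next
      case xz
      have "x \<in> {p, q}" "z \<in> {p, q}" unfolding xz by simp_all
      then have hits_x: "hits_uy_crossings {u, y, x}" and hits_z: "hits_uy_crossings {u, y, z}"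
        by (intro hits; blast)+
      obtain x' where x': "E x x'" "x' \<notin> {u, y, z}"
        by (rule exists_neighbour_outside[OF kc vertices(2), of "{u, y, z}"])
          (auto simp: card_insert_if)
      have "x' \<in> V" "x' \<noteq> x" using x'(1) edgeD by blast+
      then have zx': "connected_component (- crossing_cycle) (pos z) (pos x')"
        using joined[OF _ card3 hits_x] vertices x'(2) z(2) \<open>z \<noteq> u\<close> by auto
      have "path_image (D x x') \<inter> crossing_cycle = {}"
        using edge_outside_avoids_crossing_cycle[OF hits_z _ _ x'(1)] x'(2) distinct z(2) by auto
      then show ?thesis
        using connected_component_trans[OF zx' connected_component_sym[OF edge_connected_component[OF x'(1)]]]
        by blast
    qed
  qed
qed

definition opposite_crossing_cycle :: "complex set" where
  "opposite_crossing_cycle = D u w ` {0..t} \<union> D x y ` {0..s} \<union> path_image (D u x)"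

lemma triangle_crossing_swap: "triangle_crossing V E pos D u y x w (1 - s) t"
proof (intro triangle_crossing.intro[OF one_plane_graph_axioms] triangle_crossing_axioms.intro)
  show "E y x" using edges(3) edgeD by blast
  show "D y x (1 - s) = D u w t"
    using crossing by (simp add: edge_reverse[OF edges(3)] reversepath_def)
  show "1 - s \<in> {0<..<1}" using params by simp
qed (use edges w_ne params in simp_all)

lemma swapped_crossing_segment: "D y x ` {1 - s..1} = D x y ` {0..s}"
proof -
  have "D y x ` {1 - s..1} = D x y ` ((-) 1 ` {1 - s..1})"
    by (simp only: edge_reverse[OF edges(3)] reversepath_o image_comp)
  then show ?thesis by simp
qed

lemma triangle_loop:
  obtains g where "simple_path g" "pathfinish g = pathstart g" "path_image g = triangle"
proof -
  note loop = triangle_jordan[OF edges(1-3)]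
  have "path_image (D u x +++ (D x y +++ reversepath (D u y))) = triangle"
    unfolding loop(3) triangle_def by blast
  then show ?thesis using that loop(1,2) by blast
qed

lemma crossing_edge_start_avoids_triangle: "D u w ` {0<..<t} \<inter> triangle = {}"
proof -
  have "D u w r \<notin> triangle" if r: "r \<in> {0<..<t}" for r
  proof -
    have r01: "r \<in> {0<..<1}" using r params by auto
    then have int: "D u w r \<in> edge_interior u w" by (auto simp: edge_interior_def)
    then have "D u w r \<noteq> pos u" "D u w r \<in> path_image (D u w)"
      using edge_interior_not_vertex[OF edges(4)] vertices(1) path_image_edge[OF edges(4)] by blast+
    then have "D u w r \<notin> path_image (D u x) \<union> path_image (D u y)"
      using adjacent_edges_Int[OF edges(1,4)] adjacent_edges_Int[OF edges(2,4)] w_ne by blast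
    moreover have "D u w r \<notin> path_image (D x y)"
    proof
      assume "D u w r \<in> path_image (D x y)"
      moreover have "D u w r \<notin> pos ` V" using int edge_interior_not_vertex[OF edges(4)] by blast
      ultimately obtain s' where s': "s' \<in> {0<..<1}" "D x y s' = D u w r"
        using path_image_edge[OF edges(3)] vertices(2,3) unfolding edge_interior_def by auto
      have "s = s'"
        using cross_unique_param[OF edges(3,4) xy_neq_uw params s'(1) r01 crossing s'(2)] .
      then have "D u w r = D u w t" using s'(2) crossing by simp
      then show False using edge_inj[OF edges(4), of r t] r params by auto
    qed
    ultimately show ?thesis unfolding triangle_def by blast
  qed
  then show ?thesis by blast
qed

lemma edge_end_segment_avoids_triangle:
  assumes z: "E u z" "z \<notin> {w, x, y}" and b: "0 < b"
  shows "D u z ` {b..1} \<inter> triangle = {}"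
proof -
  have "x \<noteq> z" "y \<noteq> z" "{u, z} \<noteq> {u, w}" "{u, z} \<noteq> {x, y}" using z(2) distinct by auto
  then have "path_image (D u z) \<inter> path_image (D x y) = pos ` ({u, z} \<inter> {x, y})"
    using uncrossed_edges_Int[OF z(1) edges(3) edge_not_crossing_xy[OF z(1)]] by blast
  moreover have "{u, z} \<inter> {x, y} = {}" using z(2) distinct by auto
  moreover have "path_image (D u z) \<inter> (path_image (D u x) \<union> path_image (D u y)) \<subseteq> {pos u}"
    using adjacent_edges_Int[OF edges(1) z(1) \<open>x \<noteq> z\<close>] adjacent_edges_Int[OF edges(2) z(1) \<open>y \<noteq> z\<close>]
    by blast
  ultimately have "(path_image (D u z) - {pos u}) \<inter> triangle = {}"
    unfolding triangle_def by auto
  moreover have "D u z ` {b..1} \<subseteq> path_image (D u z) - {pos u}"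
  proof -
    have "D u z r \<noteq> D u z 0" if "r \<in> {b..1}" for r
      using edge_inj[OF z(1), of r 0] b that by auto
    then show ?thesis using b edge_start[OF z(1)] by (auto simp: path_image_def)
  qed
  ultimately show ?thesis by blast
qed

lemma crossing_edge_start_joined:
  assumes z: "E u z" "z \<notin> {w, x, y}"
    and rot: "rot_between pos D u x w y" "rot_between pos D u x z y"
    and r: "r \<in> {0<..<t}"
  shows "connected_component (- triangle) (D u w r) (pos z)"
proof -
  have "x \<noteq> z" "y \<noteq> z" using z(2) by auto
  note corners = triangle_corners[OF edges(1-3)]
  have meet: "path_image (D u x) \<inter> path_image (D u y) \<subseteq> {pos u}"
    "path_image (D u w) \<inter> (path_image (D u x) \<union> path_image (D u y)) \<subseteq> {pos u}"
    "path_image (D u z) \<inter> (path_image (D u x) \<union> path_image (D u y)) \<subseteq> {pos u}"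
    using corners(1) adjacent_edges_Int[OF edges(4) edges(1) w_ne(1)]
      adjacent_edges_Int[OF edges(4) edges(2) w_ne(2)] adjacent_edges_Int[OF z(1) edges(1)]
      adjacent_edges_Int[OF z(1) edges(2)] \<open>x \<noteq> z\<close> \<open>y \<noteq> z\<close> by auto
  have far: "closed (path_image (D x y))" "pos u \<notin> path_image (D x y)"
    "path_image (D x y) \<inter> path_image (D u x) \<subseteq> {D u x 1}"
    "path_image (D x y) \<inter> path_image (D u y) \<subseteq> {D u y 1}"
    using compact_imp_closed[OF compact_path_image[OF arc_imp_path[OF arc_edge[OF edges(3)]]]]
      vertex_on_edge[OF edges(3) vertices(1)] distinct corners(2,3)
      edge_finish[OF edges(1)] edge_finish[OF edges(2)] by auto
  have "0 < t" "t \<le> 1" using params by auto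
  from rotation_between_connected[OF arc_edge[OF edges(1)] arc_edge[OF edges(2)]
      arc_edge[OF edges(4)] arc_edge[OF z(1)] edge_start[OF edges(1)] edge_start[OF edges(2)]
      edge_start[OF edges(4)] edge_start[OF z(1)] meet far this
      rot_between_eventually[OF rot(1)] rot_between_eventually[OF rot(2)]]
  obtain a b where ab: "a \<in> {0<..<t}" "b \<in> {0<..<1}"
    "connected_component (- triangle) (D u w a) (D u z b)"
    unfolding triangle_def by blast
  have "connected_component (- triangle) (D u w r) (D u w a)"
  proof (rule connected_componentI)
    show "connected (D u w ` {0<..<t})"
      using arc_edge[OF edges(4)] params unfolding arc_def path_def
      by (intro connected_continuous_image) (auto elim: continuous_on_subset)
  qed (use r ab crossing_edge_start_avoids_triangle in auto)
  moreover have "connected_component (- triangle) (D u z b) (pos z)"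
  proof (rule connected_componentI)
    show "connected (D u z ` {b..1})"
      using arc_edge[OF z(1)] ab(2) by (intro connected_path_segment_image arc_imp_path) auto
    show "pos z \<in> D u z ` {b..1}"
      using edge_finish[OF z(1)] ab(2) by (intro image_eqI[where x=1]) auto
  qed (use ab(2) edge_end_segment_avoids_triangle[OF z, of b] in auto)
  ultimately show ?thesis
    using ab(3) connected_component_trans by metis
qed

lemma crossing_cycles_Int: "opposite_crossing_cycle \<inter> crossing_cycle = D u w ` {0..t}"
proof -
  define P L R where "P = D u w ` {0..t}" and "L = D x y ` {0..s}" and "R = D x y ` {s..1}"
  note corners = triangle_corners[OF edges(1-3)]
  have "L \<inter> R = {D x y s}"
    unfolding L_def R_def by (rule arc_segment_images_Int[OF arc_edge[OF edges(3)]]) (use params in auto)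
  moreover have "pos u \<in> P" "D x y s \<in> P"
    unfolding P_def using edge_start[OF edges(4)] crossing params
    by (auto intro: image_eqI[where x=0] image_eqI[where x=t])
  ultimately have "L \<inter> R \<subseteq> P" "path_image (D u x) \<inter> path_image (D u y) \<subseteq> P"
    using corners(1) by auto
  moreover have L: "L \<subseteq> path_image (D x y)" "pos y \<notin> L"
    and R: "R \<subseteq> path_image (D x y)" "pos x \<notin> R"
    unfolding L_def R_def using crossing_segments(2,3) crossing_segments_avoid_ends(2,3) by simp_all
  have "L \<inter> path_image (D u y) \<subseteq> {pos y}" "path_image (D u x) \<inter> R \<subseteq> {pos x}"
    using L(1) R(1) corners(2,3) by blast+
  then have "L \<inter> path_image (D u y) = {}" "path_image (D u x) \<inter> R = {}"
    using L(2) R(2) by blast+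
  ultimately show ?thesis
    unfolding opposite_crossing_cycle_def crossing_cycle_def P_def[symmetric] L_def[symmetric]
      R_def[symmetric] by auto
qed

lemma triangle_subset_crossing_cycles: "triangle \<subseteq> opposite_crossing_cycle \<union> crossing_cycle"
proof -
  have "path_image (D x y) = D x y ` {0..s} \<union> D x y ` {s..1}"
    using params by (intro path_image_split) auto
  then show ?thesis unfolding triangle_def opposite_crossing_cycle_def crossing_cycle_def by auto
qed

lemma crossing_cycles_minus_triangle:
  "opposite_crossing_cycle \<union> crossing_cycle - triangle \<subseteq> D u w ` {0<..<t}"
proof -
  define P P0 L R where "P = D u w ` {0..t}" and "P0 = D u w ` {0<..<t}"
    and "L = D x y ` {0..s}" and "R = D x y ` {s..1}"
  have "{0..t} = {0<..<t} \<union> {0, t}" using params by auto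
  then have "P = P0 \<union> {D u w 0, D u w t}" unfolding P_def P0_def by auto
  moreover have "D u w 0 \<in> triangle"
    using edge_start[OF edges(4)] path_image_edge[OF edges(1)] unfolding triangle_def by auto
  moreover have "D x y s \<in> D x y ` {s..1}" using params by auto
  then have "D u w t \<in> triangle"
    using crossing crossing_segments(3) unfolding triangle_def by auto
  moreover have "L \<subseteq> triangle" "R \<subseteq> triangle"
    using crossing_segments unfolding L_def R_def triangle_def by blast+
  ultimately show ?thesis
    unfolding opposite_crossing_cycle_def crossing_cycle_def P_def[symmetric] P0_def[symmetric]
      L_def[symmetric] R_def[symmetric] triangle_def by blast
qed

lemma no_other_edge_between:
  assumes kc: "k_connected V E 4" and z: "E u z" "z \<noteq> w"
    and rot: "rot_between pos D u x w y" "rot_between pos D u x z y"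
  shows False
proof -
  interpret swap: triangle_crossing V E pos D u y x w "1 - s" t by (rule triangle_crossing_swap)
  have swap_cycle: "swap.crossing_cycle = opposite_crossing_cycle"
    unfolding swap.crossing_cycle_def opposite_crossing_cycle_def swapped_crossing_segment by blast
  have z_ne: "z \<notin> {w, x, y}" using z(2) rot(2) unfolding rot_between_def by auto
  have sep_y: "connected_component (- opposite_crossing_cycle) (pos z) (pos y)"
    using swap.crossing_cycle_not_separating[OF kc z(1)] z_ne swap_cycle by auto
  have sep_x: "connected_component (- crossing_cycle) (pos z) (pos x)"
    using crossing_cycle_not_separating[OF kc z(1) z_ne] .
  obtain g where g: "simple_path g" "pathfinish g = pathstart g" "path_image g = triangle"
    by (rule triangle_loop)
  have "\<not> (connected_component (- opposite_crossing_cycle) (pos z) (pos y) \<and>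
      connected_component (- crossing_cycle) (pos z) (pos x))"
  proof (rule jordan_theta_separation[OF g(1,2)])
    show "compact opposite_crossing_cycle" using swap.compact_crossing_cycle swap_cycle by simp
    show "connected (opposite_crossing_cycle \<inter> crossing_cycle)"
      unfolding crossing_cycles_Int using arc_edge[OF edges(4)] params
      by (intro connected_path_segment_image arc_imp_path) auto
    show "pos z \<notin> path_image g"
      using edge_end_segment_avoids_triangle[OF z(1) z_ne, of 1] edge_finish[OF z(1)] g(3) by auto
    show "opposite_crossing_cycle \<union> crossing_cycle - path_image g
        \<subseteq> connected_component_set (- path_image g) (pos z)"
    proof
      fix p assume "p \<in> opposite_crossing_cycle \<union> crossing_cycle - path_image g"
      then obtain r where "r \<in> {0<..<t}" "p = D u w r"
        using crossing_cycles_minus_triangle g(3) by blast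
      then show "p \<in> connected_component_set (- path_image g) (pos z)"
        using connected_component_sym[OF crossing_edge_start_joined[OF z(1) z_ne rot]] g(3) by simp
    qed
    show "pos y \<notin> opposite_crossing_cycle" "pos x \<notin> crossing_cycle"
      using connected_component_in[OF sep_y] connected_component_in[OF sep_x] by blast+
    show "pos y \<in> path_image g" "pos x \<in> path_image g"
      using g(3) path_image_edge[OF edges(1)] path_image_edge[OF edges(2)]
      unfolding triangle_def by auto
  qed (use compact_crossing_cycle triangle_subset_crossing_cycles g(3) in auto)
  then show False using sep_x sep_y by blast
qed

end

theorem proposition1:
  fixes V :: "'v set" and E :: "'v \<Rightarrow> 'v \<Rightarrow> bool"
    and pos :: "'v \<Rightarrow> complex" and D :: "'v \<Rightarrow> 'v \<Rightarrow> real \<Rightarrow> complex"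
    and u x y :: 'v
  assumes "one_plane V E pos D"
    and "k_connected V E 4"
    and "u \<in> V" and "E u x" and "E u y" and "x \<noteq> y"
    and "card {w. E u w \<and> rot_between pos D u x w y} \<ge> 2"
  shows "E x y \<longrightarrow> (\<forall>w. E u w \<and> rot_between pos D u x w y \<longrightarrow> \<not> crosses D x y u w)"
proof (intro impI allI notI)
  fix w
  assume "E x y" and w: "E u w \<and> rot_between pos D u x w y" and "crosses D x y u w"
  interpret one_plane_graph V E pos D by (rule one_plane_graph.intro) (rule assms(1))
  obtain s t where st: "s \<in> {0<..<1}" "t \<in> {0<..<1}" "D x y s = D u w t"
    using \<open>crosses D x y u w\<close> unfolding crosses_def by blast
  have "w \<noteq> x" "w \<noteq> y" using w unfolding rot_between_def by auto
  interpret triangle_crossing V E pos D u x y w s t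
    using assms(4,5) \<open>E x y\<close> w \<open>w \<noteq> x\<close> \<open>w \<noteq> y\<close> st by unfold_locales auto
  let ?S = "{w. E u w \<and> rot_between pos D u x w y}"
  have "\<not> ?S \<subseteq> {w}"
  proof
    assume "?S \<subseteq> {w}"
    then have "card ?S \<le> 1" using card_mono[of "{w}" ?S] by simp
    then show False using assms(7) by simp
  qed
  then obtain z where "E u z" "rot_between pos D u x z y" "z \<noteq> w" by blast
  then show False using no_other_edge_between[OF assms(2)] w by blast
qed

end
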